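(* Consider the 4-state Jukes–Cantor coalescent mixture (CK) model on the rooted 3-taxon species tree $((a:\ell_a,b:\ell_b):\ell_{ab},\,c:\ell_c)$ with non-negative edge lengths. If $\ell_a=\ell_{ab}+\ell_c$, then the resulting probability tensor $P=(p_{ijk})$ (indices ordered $a,b,c$) is invariant under exchanging the $a$ and $c$ indices: $p_{ijk}=p_{kji}$ for all $i,j,k$.
   Context: The CK Jukes–Cantor model on a rooted species tree with edge lengths (not necessarily ultrametric): with a constant population size, a gene tree with one lineage sampled per taxon is drawn under the multispecies coalescent (lineages coalesce only within populations, i.e., edges of the species tree including the infinite root population), and a site evolves on the gene tree by the 4-state Jukes–Cantor process (rate matrix with all off-diagonal entries equal, uniform stationary distribution) started from the uniform distribution at the gene tree root, with edge lengths converted by a fixed scalar mutation rate. The site pattern probability tensor is the mixture over gene trees. The notation $(a:\ell_a,b:\ell_b):\ell_{ab}$ means the cherry $\{a,b\}$ with pendant edge lengths $\ell_a,\ell_b$ joined by an edge of length $\ell_{ab}$ to the root, and $c:\ell_c$ is a pendant edge of length $\ell_c$ from the root. *)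

theory Defs
  imports "HOL-Analysis.Analysis"
begin

text \<open>Nucleotide states are encoded as the naturals 0,1,2,3.
  Jukes--Cantor transition probability after a gene-tree branch of length t
  (coalescent units), with rate matrix Q having all off-diagonal entries q,
  and mutation rate mu converting branch lengths: P(t) = exp(Q * mu * t).\<close>
definition jc :: "real \<Rightarrow> real \<Rightarrow> real \<Rightarrow> nat \<Rightarrow> nat \<Rightarrow> real" where
  "jc q mu t i j =
     (if i = j then 1/4 + 3/4 * exp (- 4 * q * mu * t)
               else 1/4 - 1/4 * exp (- 4 * q * mu * t))"

text \<open>Site pattern probability on the rooted gene tree ((x:u1, y:u2):u3, z:u4),
  uniform root distribution; returns probability of states (i,j,k) at leaves (x,y,z).\<close>
definition tree3 :: "real \<Rightarrow> real \<Rightarrow> real \<Rightarrow> real \<Rightarrow> real \<Rightarrow> real \<Rightarrow>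
    nat \<Rightarrow> nat \<Rightarrow> nat \<Rightarrow> real" where
  "tree3 q mu u1 u2 u3 u4 i j k =
     (\<Sum>r<4. \<Sum>s<4. (1/4) * jc q mu u3 r s * jc q mu u1 s i * jc q mu u2 s j
                        * jc q mu u4 r k)"

text \<open>Mixture over gene trees under the multispecies
  coalescent (coalescence rate 1 per pair of lineages):
  (1) a,b coalesce in the ab population at time t in [0,lab] (density e^{-t}),
      then coalesce with c in the root population after time s (density e^{-s});
  (2) no coalescence in the ab population (probability e^{-lab}); in the root
      population the first coalescence is after time s1 (density 3e^{-3 s1}),
      each of the three pairs with probability 1/3, the second after a further
      time s2 (density e^{-s2}).\<close>
definition ck :: "real \<Rightarrow> real \<Rightarrow> real \<Rightarrow> real \<Rightarrow> real \<Rightarrow> real \<Rightarrow>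
    nat \<Rightarrow> nat \<Rightarrow> nat \<Rightarrow> real" where
  "ck q mu la lb lab lc i j k =
     (LINT t:{0..lab}|lborel. LINT s:{0..}|lborel.
        exp (- t) * exp (- s) *
        tree3 q mu (la + t) (lb + t) (lab - t + s) (lc + s) i j k)
   + exp (- lab) *
     (LINT s1:{0..}|lborel. LINT s2:{0..}|lborel.
        exp (- 3 * s1) * exp (- s2) *
        (  tree3 q mu (la + lab + s1) (lb + lab + s1) s2 (lc + s1 + s2) i j k
         + tree3 q mu (la + lab + s1) (lc + s1) s2 (lb + lab + s1 + s2) i k j
         + tree3 q mu (lb + lab + s1) (lc + s1) s2 (la + lab + s1 + s2) j k i))"

end

theory Submission
  imports Defs "HOL-Probability.Distributions"
begin

text \<open>With \<open>x = 4 q mu\<close>, a Jukes--Cantor transition probability is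
  \<open>1/4 + (\<delta> i j - 1/4) exp (-x t)\<close>.  By Chapman--Kolmogorov every gene tree reduces to a
  star tree, whose pattern probability is a polynomial in the three leaf-to-centre decays with
  coefficients \<open>A, B, C\<close> (the centred deltas of the pairs ab, ac, bc) and \<open>D\<close>.  After
  integrating over the coalescence times, every term carrying the probability \<open>exp (-lab)\<close> of no
  coalescence in the ab population cancels, leaving \<open>ck_closed_form\<close>, in which \<open>A\<close> multiplies
  \<open>e la * e lb\<close> and \<open>C\<close> multiplies \<open>e lb * e lab * e lc\<close> (with \<open>e = decay x\<close>) by the same
  factor.  Exchanging the states at a and c swaps \<open>A\<close> and \<open>C\<close>, and \<open>la = lab + lc\<close> makes the
  two monomials equal.\<close>

definition decay :: "real \<Rightarrow> real \<Rightarrow> real" where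
  "decay x t = exp (- (x * t))"

definition centred_delta :: "nat \<Rightarrow> nat \<Rightarrow> real" where
  "centred_delta i j = (if i = j then 3/4 else -1/4)"

definition centred_delta3 :: "nat \<Rightarrow> nat \<Rightarrow> nat \<Rightarrow> real" where
  "centred_delta3 i j k = (\<Sum>s<4. centred_delta s i * centred_delta s j * centred_delta s k)"

lemma decay_add: "decay x (s + t) = decay x s * decay x t"
  unfolding decay_def by (simp add: distrib_left exp_add[symmetric])

lemma decay_diff: "decay x (s - t) = decay x s / decay x t"
  unfolding decay_def by (simp add: right_diff_distrib exp_diff[symmetric])

lemma decay_pos: "decay x t > 0"
  unfolding decay_def by simp

lemma centred_delta_commute: "centred_delta i j = centred_delta j i"
  unfolding centred_delta_def by simp

lemma centred_delta3_rotate: "centred_delta3 j k i = centred_delta3 i j k"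
  unfolding centred_delta3_def by (simp add: ac_simps)

lemma centred_delta3_swap_13: "centred_delta3 k j i = centred_delta3 i j k"
  unfolding centred_delta3_def by (simp add: ac_simps)

lemma centred_delta3_swap_23: "centred_delta3 i k j = centred_delta3 i j k"
  unfolding centred_delta3_def by (simp add: ac_simps)

lemma jc_eq_decay: "jc q mu t i j = 1/4 + centred_delta i j * decay (4 * q * mu) t"
  unfolding jc_def centred_delta_def decay_def by simp

lemma sum_centred_delta: "i < 4 \<Longrightarrow> (\<Sum>s<4. centred_delta s i) = 0"
  by (auto simp: centred_delta_def less_Suc_eq numeral_eq_Suc)

lemma sum_centred_delta_mult:
  "i < 4 \<Longrightarrow> j < 4 \<Longrightarrow> (\<Sum>s<4. centred_delta s i * centred_delta s j) = centred_delta i j"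
  by (auto simp: centred_delta_def less_Suc_eq numeral_eq_Suc)

lemma jc_chapman_kolmogorov:
  assumes "i < 4" "k < 4"
  shows "(\<Sum>r<4. jc q mu s r i * jc q mu t r k) = jc q mu (s + t) i k"
proof -
  let ?e = "decay (4 * q * mu)"
  have "(\<Sum>r<4. jc q mu s r i * jc q mu t r k)
      = 1/4 + ?e s / 4 * (\<Sum>r<4. centred_delta r i) + ?e t / 4 * (\<Sum>r<4. centred_delta r k)
        + ?e s * ?e t * (\<Sum>r<4. centred_delta r i * centred_delta r k)"
    by (simp add: jc_eq_decay algebra_simps sum.distrib sum_distrib_left sum_distrib_right
        sum_divide_distrib)
  then show ?thesis
    using assms by (simp add: sum_centred_delta sum_centred_delta_mult jc_eq_decay decay_add)
qed

text \<open>Felsenstein's pulley principle: the root distribution is uniform and the transition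
  matrices are symmetric, so the root can be moved to the internal node, merging u3 and u4.\<close>

lemma tree3_pulley:
  assumes "k < 4"
  shows "tree3 q mu u1 u2 u3 u4 i j k
       = (\<Sum>s<4. 1/4 * jc q mu u1 s i * jc q mu u2 s j * jc q mu (u3 + u4) s k)"
proof -
  have "tree3 q mu u1 u2 u3 u4 i j k
      = (\<Sum>s<4. 1/4 * jc q mu u1 s i * jc q mu u2 s j * (\<Sum>r<4. jc q mu u3 r s * jc q mu u4 r k))"
    unfolding tree3_def by (subst sum.swap) (simp add: sum_distrib_left ac_simps)
  also have "\<dots> = (\<Sum>s<4. 1/4 * jc q mu u1 s i * jc q mu u2 s j * jc q mu (u3 + u4) s k)"
    using assms by (simp add: jc_chapman_kolmogorov)
  finally show ?thesis .
qed

definition star3_poly :: "real \<Rightarrow> real \<Rightarrow> real \<Rightarrow> real \<Rightarrow> real \<Rightarrow> real \<Rightarrow> real \<Rightarrow> real" where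
  "star3_poly A B C D e1 e2 e3 =
     1/64 + 1/16 * (A * e1 * e2 + B * e1 * e3 + C * e2 * e3) + 1/4 * D * e1 * e2 * e3"

lemma star3_jc:
  assumes "i < 4" "j < 4" "k < 4"
  shows "(\<Sum>s<4. 1/4 * jc q mu u1 s i * jc q mu u2 s j * jc q mu u3 s k)
       = star3_poly
           (centred_delta i j) (centred_delta i k) (centred_delta j k) (centred_delta3 i j k)
           (decay (4 * q * mu) u1) (decay (4 * q * mu) u2) (decay (4 * q * mu) u3)"
proof -
  let ?g = centred_delta and ?e = "decay (4 * q * mu)"
  have summand: "1/4 * jc q mu u1 s i * jc q mu u2 s j * jc q mu u3 s k
      = 1/256 + (?e u1 / 64 * ?g s i + ?e u2 / 64 * ?g s j + ?e u3 / 64 * ?g s k)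
        + (?e u1 * ?e u2 / 16 * (?g s i * ?g s j) + ?e u1 * ?e u3 / 16 * (?g s i * ?g s k)
           + ?e u2 * ?e u3 / 16 * (?g s j * ?g s k))
        + ?e u1 * ?e u2 * ?e u3 / 4 * (?g s i * ?g s j * ?g s k)" for s
    by (simp add: jc_eq_decay field_simps)
  show ?thesis
    unfolding summand sum.distrib sum_distrib_left[symmetric]
    using assms
    by (simp add: sum_centred_delta sum_centred_delta_mult star3_poly_def centred_delta3_def
        algebra_simps)
qed

definition has_set_integral :: "real set \<Rightarrow> (real \<Rightarrow> real) \<Rightarrow> real \<Rightarrow> bool" where
  "has_set_integral A f v \<longleftrightarrow> has_bochner_integral lborel (\<lambda>x. indicator A x *\<^sub>R f x) v"

lemma has_set_integral_integral_eq: "has_set_integral A f v \<Longrightarrow> (LINT x:A|lborel. f x) = v"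
  unfolding has_set_integral_def set_lebesgue_integral_def
  by (rule has_bochner_integral_integral_eq)

lemma has_set_integral_add:
  "has_set_integral A f v \<Longrightarrow> has_set_integral A g w \<Longrightarrow> has_set_integral A (\<lambda>x. f x + g x) (v + w)"
  unfolding has_set_integral_def by (drule (1) has_bochner_integral_add) (simp add: distrib_left)

lemma has_set_integral_mult_right:
  assumes "has_set_integral A f v"
  shows "has_set_integral A (\<lambda>x. c * f x) (c * v)"
proof -
  have "has_bochner_integral lborel (\<lambda>x. c * (indicator A x *\<^sub>R f x)) (c * v)"
    using assms unfolding has_set_integral_def by (rule has_bochner_integral_mult_right)
  then show ?thesis
    unfolding has_set_integral_def by (simp add: mult.left_commute)
qed

lemma has_set_integral_exp_Ici:
  fixes c :: real
  assumes "c > 0"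
  shows "has_set_integral {0..} (\<lambda>s. exp (- (c * s))) (1 / c)"
proof -
  have "has_bochner_integral lborel (erlang_density 0 c) 1"
    using nn_integral_erlang_ith_moment[OF assms, of 0 0] assms
    by (intro has_bochner_integral_nn_integral) auto
  then have "has_bochner_integral lborel (\<lambda>s. 1 / c * erlang_density 0 c s) (1 / c * 1)"
    by (rule has_bochner_integral_mult_right)
  then show ?thesis
    unfolding has_set_integral_def
    by (rule has_bochner_integral_cong[THEN iffD1, rotated 3])
       (use assms in \<open>auto simp: erlang_density_def indicator_def\<close>)
qed

lemma has_set_integral_exp_Icc:
  fixes c L :: real
  assumes "c > 0" and "L \<ge> 0"
  shows "has_set_integral {0..L} (\<lambda>s. exp (- (c * s))) ((1 - exp (- (c * L))) / c)"
proof -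
  have cont: "continuous_on {0..L} (\<lambda>s. exp (- (c * s)))"
    by (intro continuous_intros)
  have "(LBINT s. indicator {0..L} s *\<^sub>R exp (- (c * s)))
      = - exp (- (c * L)) / c - - exp (- (c * 0)) / c"
    using assms(1)
    by (intro integral_FTC_atLeastAtMost[OF assms(2) _ cont]
          has_real_derivative_iff_has_vector_derivative[THEN iffD1])
       (auto intro!: derivative_eq_intros)
  moreover have "set_integrable lborel {0..L} (\<lambda>s. exp (- (c * s)))"
    by (rule borel_integrable_atLeastAtMost'[OF cont])
  ultimately show ?thesis
    unfolding has_set_integral_def has_bochner_integral_iff set_integrable_def
    using assms(1) by (simp add: field_simps)
qed

lemma exp_power_decay_power: "exp (- s) ^ m * decay x s ^ n = exp (- ((real m + real n * x) * s))"
  unfolding decay_def by (simp add: exp_of_nat_mult[symmetric] exp_add[symmetric] algebra_simps)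

lemma has_set_integral_exp_decay_Ici:
  assumes "k = real m + real n * x" and "k > 0"
  shows "has_set_integral {0..} (\<lambda>s. exp (- s) ^ m * decay x s ^ n) (1 / k)"
  unfolding exp_power_decay_power assms(1)[symmetric] using has_set_integral_exp_Ici[OF assms(2)] .

lemma has_set_integral_exp_decay_Icc:
  assumes "k = real m + real n * x" and "k > 0" and "L \<ge> 0"
  shows "has_set_integral {0..L} (\<lambda>s. exp (- s) ^ m * decay x s ^ n)
           ((1 - exp (- L) ^ m * decay x L ^ n) / k)"
  unfolding exp_power_decay_power assms(1)[symmetric]
  using has_set_integral_exp_Icc[OF assms(2,3)] .

lemma lint_Ici_exp_decay2:
  fixes x :: real
  assumes "x > 0"
  shows "(LINT s:{0..}|lborel. exp (- s) * (P + Q * decay x s ^ 2)) = P + Q / (1 + 2 * x)"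
proof -
  have "has_set_integral {0..}
          (\<lambda>s. P * (exp (- s) ^ 1 * decay x s ^ 0) + Q * (exp (- s) ^ 1 * decay x s ^ 2))
          (P * (1 / 1) + Q * (1 / (1 + 2 * x)))"
    using assms
    by (intro has_set_integral_add has_set_integral_mult_right has_set_integral_exp_decay_Ici) auto
  from has_set_integral_integral_eq[OF this] show ?thesis
    by (simp add: algebra_simps)
qed

lemma lint_Icc_exp_decay:
  fixes x L :: real
  assumes "x > 0" and "L \<ge> 0"
  shows "(LINT t:{0..L}|lborel. exp (- t) * (c0 + c1 * decay x t + c2 * decay x t ^ 2))
       = c0 * (1 - exp (- L)) + c1 * (1 - exp (- L) * decay x L) / (1 + x)
         + c2 * (1 - exp (- L) * decay x L ^ 2) / (1 + 2 * x)"
proof -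
  have "has_set_integral {0..L}
          (\<lambda>t. c0 * (exp (- t) ^ 1 * decay x t ^ 0) + c1 * (exp (- t) ^ 1 * decay x t ^ 1)
            + c2 * (exp (- t) ^ 1 * decay x t ^ 2))
          (c0 * ((1 - exp (- L) ^ 1 * decay x L ^ 0) / 1)
            + c1 * ((1 - exp (- L) ^ 1 * decay x L ^ 1) / (1 + x))
            + c2 * ((1 - exp (- L) ^ 1 * decay x L ^ 2) / (1 + 2 * x)))"
    using assms
    by (intro has_set_integral_add has_set_integral_mult_right has_set_integral_exp_decay_Icc) auto
  from has_set_integral_integral_eq[OF this] show ?thesis
    by (simp add: algebra_simps)
qed

lemma lint_Ici_exp3_decay:
  fixes x :: real
  assumes "x > 0"
  shows "(LINT s:{0..}|lborel. exp (- s) ^ 3 * (c0 + c2 * decay x s ^ 2 + c3 * decay x s ^ 3))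
       = c0 / 3 + c2 / (3 + 2 * x) + c3 / (3 + 3 * x)"
proof -
  have "has_set_integral {0..}
          (\<lambda>s. c0 * (exp (- s) ^ 3 * decay x s ^ 0) + c2 * (exp (- s) ^ 3 * decay x s ^ 2)
            + c3 * (exp (- s) ^ 3 * decay x s ^ 3))
          (c0 * (1 / 3) + c2 * (1 / (3 + 2 * x)) + c3 * (1 / (3 + 3 * x)))"
    using assms
    by (intro has_set_integral_add has_set_integral_mult_right has_set_integral_exp_decay_Ici) auto
  from has_set_integral_integral_eq[OF this] show ?thesis
    by (simp add: algebra_simps)
qed

lemma ab_population_integrand_eq:
  fixes x la lb lab lc :: real
  defines "a \<equiv> decay x la" and "b \<equiv> decay x lb" and "c \<equiv> decay x lc" and "l \<equiv> decay x lab"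
  shows "exp (- t) * exp (- s) *
           star3_poly A B C D (decay x (la + t)) (decay x (lb + t))
             (decay x (lab - t + s + (lc + s)))
       = exp (- s) * (exp (- t) * (1/64 + A * a * b / 16 * decay x t ^ 2)
           + exp (- t) * ((B * a + C * b) * l * c / 16 + D * a * b * l * c / 4 * decay x t)
             * decay x s ^ 2)"
  using decay_pos[of x t]
  unfolding star3_poly_def decay_add decay_diff a_def b_def c_def l_def
  by (simp add: field_simps power2_eq_square)

lemma lint_coalescence_in_ab_population:
  fixes x la lb lab lc :: real
  assumes x: "x > 0" and lab: "lab \<ge> 0"
  defines "a \<equiv> decay x la" and "b \<equiv> decay x lb" and "c \<equiv> decay x lc" and "l \<equiv> decay x lab"
  shows "(LINT t:{0..lab}|lborel. LINT s:{0..}|lborel. exp (- t) * exp (- s) *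
            star3_poly A B C D (decay x (la + t)) (decay x (lb + t))
             (decay x (lab - t + s + (lc + s))))
       = (1/64 + (B * a + C * b) * l * c / (16 * (1 + 2 * x))) * (1 - exp (- lab))
         + D * a * b * l * c / (4 * (1 + 2 * x)) * (1 - exp (- lab) * l) / (1 + x)
         + A * a * b / 16 * (1 - exp (- lab) * l ^ 2) / (1 + 2 * x)"
proof -
  have "(LINT t:{0..lab}|lborel. LINT s:{0..}|lborel. exp (- t) * exp (- s) *
            star3_poly A B C D (decay x (la + t)) (decay x (lb + t))
             (decay x (lab - t + s + (lc + s))))
      = (LINT t:{0..lab}|lborel. exp (- t) * ((1/64 + (B * a + C * b) * l * c / (16 * (1 + 2 * x)))
            + D * a * b * l * c / (4 * (1 + 2 * x)) * decay x t + A * a * b / 16 * decay x t ^ 2))"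
    unfolding ab_population_integrand_eq lint_Ici_exp_decay2[OF x] a_def b_def c_def l_def
    by (simp add: add_divide_distrib algebra_simps)
  then show ?thesis
    unfolding l_def by (simp only: lint_Icc_exp_decay[OF x lab])
qed

lemma root_integrand_eq:
  fixes x la lb lab lc A B C D :: real
  defines "a \<equiv> decay x la" and "b \<equiv> decay x lb" and "c \<equiv> decay x lc" and "l \<equiv> decay x lab"
  defines "S \<equiv> A * a * b * l ^ 2 + B * a * c * l + C * b * c * l"
  shows "exp (- 3 * s1) * exp (- s2) *
            (star3_poly A B C D (decay x (la + lab + s1)) (decay x (lb + lab + s1))
               (decay x (s2 + (lc + s1 + s2)))
           + star3_poly B A C D (decay x (la + lab + s1)) (decay x (lc + s1))
               (decay x (s2 + (lb + lab + s1 + s2)))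
           + star3_poly C A B D (decay x (lb + lab + s1)) (decay x (lc + s1))
               (decay x (s2 + (la + lab + s1 + s2))))
       = exp (- s2) * (exp (- s1) ^ 3 * (3/64 + S / 16 * decay x s1 ^ 2)
           + exp (- s1) ^ 3
             * (S / 8 * decay x s1 ^ 2 + 3/4 * D * a * b * c * l ^ 2 * decay x s1 ^ 3)
             * decay x s2 ^ 2)"
proof -
  have "exp (- 3 * s1) = exp (- s1) ^ 3"
    by (simp add: exp_of_nat_mult[symmetric])
  then show ?thesis
    unfolding star3_poly_def decay_add S_def a_def b_def c_def l_def
    by (simp add: field_simps power2_eq_square power3_eq_cube)
qed

lemma lint_coalescence_in_root:
  fixes x la lb lab lc :: real
  assumes x: "x > 0"
  defines "a \<equiv> decay x la" and "b \<equiv> decay x lb" and "c \<equiv> decay x lc" and "l \<equiv> decay x lab"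
  shows "(LINT s1:{0..}|lborel. LINT s2:{0..}|lborel. exp (- 3 * s1) * exp (- s2) *
            (star3_poly A B C D (decay x (la + lab + s1)) (decay x (lb + lab + s1))
               (decay x (s2 + (lc + s1 + s2)))
           + star3_poly B A C D (decay x (la + lab + s1)) (decay x (lc + s1))
               (decay x (s2 + (lb + lab + s1 + s2)))
           + star3_poly C A B D (decay x (lb + lab + s1)) (decay x (lc + s1))
               (decay x (s2 + (la + lab + s1 + s2)))))
       = 1/64 + (A * a * b * l ^ 2 + B * a * c * l + C * b * c * l) / (16 * (1 + 2 * x))
         + D * a * b * c * l ^ 2 / (4 * (1 + 2 * x) * (1 + x))"
proof -
  define S where "S = A * a * b * l ^ 2 + B * a * c * l + C * b * c * l"
  have pos: "1 + 2 * x > 0" "3 + 2 * x > 0" "1 + x > 0"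
    using x by auto
  have "(LINT s1:{0..}|lborel. LINT s2:{0..}|lborel. exp (- 3 * s1) * exp (- s2) *
            (star3_poly A B C D (decay x (la + lab + s1)) (decay x (lb + lab + s1))
               (decay x (s2 + (lc + s1 + s2)))
           + star3_poly B A C D (decay x (la + lab + s1)) (decay x (lc + s1))
               (decay x (s2 + (lb + lab + s1 + s2)))
           + star3_poly C A B D (decay x (lb + lab + s1)) (decay x (lc + s1))
               (decay x (s2 + (la + lab + s1 + s2)))))
      = (LINT s1:{0..}|lborel. exp (- s1) ^ 3
          * (3/64 + (S / 16 + S / (8 * (1 + 2 * x))) * decay x s1 ^ 2
            + 3/4 * D * a * b * c * l ^ 2 / (1 + 2 * x) * decay x s1 ^ 3))"
    unfolding root_integrand_eq lint_Ici_exp_decay2[OF x] S_def a_def b_def c_def l_def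
    by (simp add: add_divide_distrib algebra_simps)
  also have "\<dots> = 3/64 / 3 + (S / 16 + S / (8 * (1 + 2 * x))) / (3 + 2 * x)
        + 3/4 * D * a * b * c * l ^ 2 / (1 + 2 * x) / (3 + 3 * x)"
    by (rule lint_Ici_exp3_decay[OF x])
  also have "(S / 16 + S / (8 * (1 + 2 * x))) / (3 + 2 * x) = S / (16 * (1 + 2 * x))"
    using pos by (simp add: divide_simps) (simp add: algebra_simps)
  also have "3/4 * D * a * b * c * l ^ 2 / (1 + 2 * x) / (3 + 3 * x)
           = D * a * b * c * l ^ 2 / (4 * (1 + 2 * x) * (1 + x))"
    using pos by (simp add: divide_simps)
  finally show ?thesis
    unfolding S_def by simp
qed

definition ck_closed_form ::
    "real \<Rightarrow> real \<Rightarrow> real \<Rightarrow> real \<Rightarrow> real \<Rightarrow> real \<Rightarrow> real \<Rightarrow> real \<Rightarrow> real \<Rightarrow> real" where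
  "ck_closed_form x ea eb eab ec A B C D =
     1/64 + (A * ea * eb + B * ea * eab * ec + C * eb * eab * ec) / (16 * (1 + 2 * x))
     + D * ea * eb * eab * ec / (4 * (1 + 2 * x) * (1 + x))"

lemma ck_eq_closed_form:
  fixes q mu la lb lab lc :: real
  assumes "q > 0" and "mu > 0" and lab: "lab \<ge> 0" and i: "i < 4" and j: "j < 4" and k: "k < 4"
  defines "x \<equiv> 4 * q * mu"
  shows "ck q mu la lb lab lc i j k
       = ck_closed_form x (decay x la) (decay x lb) (decay x lab) (decay x lc)
           (centred_delta i j) (centred_delta i k) (centred_delta j k) (centred_delta3 i j k)"
proof -
  have x: "x > 0"
    using assms(1,2) by (simp add: x_def)
  define a b c l A B C D where "a = decay x la" and "b = decay x lb" and "c = decay x lc"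
    and "l = decay x lab" and "A = centred_delta i j" and "B = centred_delta i k"
    and "C = centred_delta j k" and "D = centred_delta3 i j k"
  have "ck q mu la lb lab lc i j k
      = (1/64 + (B * a + C * b) * l * c / (16 * (1 + 2 * x))) * (1 - exp (- lab))
        + D * a * b * l * c / (4 * (1 + 2 * x)) * (1 - exp (- lab) * l) / (1 + x)
        + A * a * b / 16 * (1 - exp (- lab) * l ^ 2) / (1 + 2 * x)
        + exp (- lab) * (1/64
            + (A * a * b * l ^ 2 + B * a * c * l + C * b * c * l) / (16 * (1 + 2 * x))
            + D * a * b * c * l ^ 2 / (4 * (1 + 2 * x) * (1 + x)))"
    unfolding ck_def tree3_pulley[OF i] tree3_pulley[OF j] tree3_pulley[OF k]
      star3_jc[OF i j k] star3_jc[OF i k j] star3_jc[OF j k i]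
      centred_delta_commute[of k j] centred_delta_commute[of j i] centred_delta_commute[of k i]
      centred_delta3_swap_23[of i k j] centred_delta3_rotate[of j k i]
      x_def[symmetric] lint_coalescence_in_ab_population[OF x lab] lint_coalescence_in_root[OF x]
      a_def b_def c_def l_def A_def B_def C_def D_def ..
  also have "\<dots> = ck_closed_form x a b l c A B C D"
  proof -
    have "1 + 2 * x > 0" "1 + x > 0"
      using x by auto
    then show ?thesis
      unfolding ck_closed_form_def
      by (simp add: divide_simps) (simp add: algebra_simps power2_eq_square)
  qed
  finally show ?thesis
    unfolding a_def b_def c_def l_def A_def B_def C_def D_def .
qed

lemma ck_closed_form_swap:
  assumes "ea = eab * ec"
  shows "ck_closed_form x ea eb eab ec A B C D = ck_closed_form x ea eb eab ec C B A D"
  unfolding ck_closed_form_def assms by (simp add: algebra_simps)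

theorem propositionA1:
  fixes q mu la lb lab lc :: real
  assumes "q > 0" and "mu > 0"
    and "la \<ge> 0" and "lb \<ge> 0" and "lab \<ge> 0" and "lc \<ge> 0"
    and "la = lab + lc"
  shows "\<forall>i<4. \<forall>j<4. \<forall>k<4. ck q mu la lb lab lc i j k = ck q mu la lb lab lc k j i"
proof (intro allI impI)
  fix i j k :: nat
  assume i: "i < 4" and j: "j < 4" and k: "k < 4"
  let ?e = "decay (4 * q * mu)"
  have la: "?e la = ?e lab * ?e lc"
    using assms(7) by (simp add: decay_add)
  have "ck q mu la lb lab lc i j k
      = ck_closed_form (4 * q * mu) (?e la) (?e lb) (?e lab) (?e lc)
          (centred_delta i j) (centred_delta i k) (centred_delta j k) (centred_delta3 i j k)"
    using assms(1,2,5) i j k by (rule ck_eq_closed_form)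
  also have "\<dots> = ck_closed_form (4 * q * mu) (?e la) (?e lb) (?e lab) (?e lc)
          (centred_delta j k) (centred_delta i k) (centred_delta i j) (centred_delta3 i j k)"
    using la by (rule ck_closed_form_swap)
  also have "\<dots> = ck_closed_form (4 * q * mu) (?e la) (?e lb) (?e lab) (?e lc)
          (centred_delta k j) (centred_delta k i) (centred_delta j i) (centred_delta3 k j i)"
    by (simp only: centred_delta_commute[of k] centred_delta_commute[of j i] centred_delta3_swap_13)
  also have "\<dots> = ck q mu la lb lab lc k j i"
    using assms(1,2,5) k j i by (rule ck_eq_closed_form[symmetric])
  finally show "ck q mu la lb lab lc i j k = ck q mu la lb lab lc k j i" .
qed

end
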